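(* Let $(R,\mathcal C)$ be a pair and $\mathfrak a$ a radical $\mathcal C$-ideal such that $(R,\mathcal C)$ is non-degenerate along $\mathfrak a$. Let $b$ be a test element of $(R,\mathcal C)$ along $\mathfrak a$. Then $\tau_{\mathfrak a}(R,\mathcal C)=Rb+\mathcal C_+b$. Furthermore, $(R,\mathcal C)$ is purely $F$-regular along $\mathfrak a$ if and only if $1$ is a principal test element of $(R,\mathcal C)$ along $\mathfrak a$, i.e. for every $r\in R$ not in any associated prime of $R/\mathfrak a$ there exist $e>0$ and $\phi\in\mathcal C_e$ with $\phi(F^e_*r)=1$.
   Context: All rings are noetherian $F$-finite commutative $\mathbb F_p$-algebras. $F^e_*R$ is $R$ viewed as an $R$-module via the $e$-th Frobenius, $\mathcal C_{e,R}=\operatorname{Hom}_R(F^e_*R,R)$, $\mathcal C_R=\bigoplus_{e\ge0}\mathcal C_{e,R}$ with product $\phi\cdot\phi'=\phi\circ F^e_*\phi'$. A pair $(R,\mathcal C)$ consists of $R$ and a graded $R$-subalgebra $\mathcal C\subseteq\mathcal C_R$; $\mathcal C_+=\bigoplus_{e>0}\mathcal C_e$. A $\mathcal C$-ideal is an ideal $\mathfrak b$ with $\phi(F^e_*\mathfrak b)\subseteq\mathfrak b$ for all $\phi\in\mathcal C_e$. $\mathcal C_+b$ denotes the ideal generated by all $\phi(F^e_*(rb))$, $e>0$, $\phi\in\mathcal C_e$, $r\in R$. A prime $\mathcal C$-ideal $\mathfrak p$ is a center of $F$-purity if $\mathcal C_+R\not\subseteq\mathfrak p$; $(R,\mathcal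 C)$ is non-degenerate along $\mathfrak a$ if all minimal primes of $\mathfrak a$ are centers of $F$-purity, and purely $F$-regular along $\mathfrak a$ if moreover every proper $\mathcal C$-ideal lies in some minimal prime of $\mathfrak a$. Let $U=\bigcup_{\mathfrak q\in\operatorname{Ass}(R/\mathfrak a)}\mathfrak q$. A principal test element along $\mathfrak a$ is $c\notin U$ such that for every $r\notin U$ there are $e>0$, $\phi\in\mathcal C_e$ with $\phi(F^e_*r)=c$ (such elements exist under the hypotheses). The test ideal $\tau_{\mathfrak a}(R,\mathcal C)$ is the smallest $\mathcal C$-ideal not contained in $U$ (equivalently $Rc+\mathcal C_+c$ for a principal test element $c$); a test element is an element of $\tau_{\mathfrak a}(R,\mathcal C)\setminus U$. *)

theory Defs
  imports "HOL-Computational_Algebra.Primes"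
begin

text \<open>The ring R is the type 'a (a commutative ring with 1); p is its characteristic.\<close>

definition is_ideal :: "'a::comm_ring_1 set \<Rightarrow> bool" where
  "is_ideal I \<longleftrightarrow> 0 \<in> I \<and> (\<forall>x\<in>I. \<forall>y\<in>I. x + y \<in> I) \<and> (\<forall>r. \<forall>x\<in>I. r * x \<in> I)"

definition ideal_span :: "'a::comm_ring_1 set \<Rightarrow> 'a set" where
  "ideal_span S = \<Inter>{I. is_ideal I \<and> S \<subseteq> I}"

definition principal_ideal :: "'a::comm_ring_1 \<Rightarrow> 'a set" where
  "principal_ideal b = {r * b | r. True}"

definition prime_ideal :: "'a::comm_ring_1 set \<Rightarrow> bool" where
  "prime_ideal P \<longleftrightarrow> is_ideal P \<and> P \<noteq> UNIV \<and> (\<forall>x y. x * y \<in> P \<longrightarrow> x \<in> P \<or> y \<in> P)"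

definition radical_ideal :: "'a::comm_ring_1 set \<Rightarrow> bool" where
  "radical_ideal I \<longleftrightarrow> is_ideal I \<and> (\<forall>x n. x ^ n \<in> I \<longrightarrow> x \<in> I)"

definition noetherian_ring :: "'a::comm_ring_1 itself \<Rightarrow> bool" where
  "noetherian_ring _ \<longleftrightarrow> (\<forall>f :: nat \<Rightarrow> 'a set.
     (\<forall>n. is_ideal (f n)) \<and> (\<forall>n. f n \<subseteq> f (Suc n)) \<longrightarrow> (\<exists>N. \<forall>n\<ge>N. f n = f N))"

text \<open>F-finite: F_*R is a finitely generated R-module (r acts on F_*R via r^p).\<close>
definition F_finite :: "nat \<Rightarrow> 'a::comm_ring_1 itself \<Rightarrow> bool" where
  "F_finite p _ \<longleftrightarrow> (\<exists>S :: 'a set. finite S \<and> (\<forall>x. \<exists>c. x = (\<Sum>s\<in>S. c s ^ p * s)))"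

text \<open>Elements of C_{e,R} = Hom_R(F^e_* R, R), viewed as maps R \<Rightarrow> R.\<close>
definition cartier_map :: "nat \<Rightarrow> nat \<Rightarrow> ('a::comm_ring_1 \<Rightarrow> 'a) \<Rightarrow> bool" where
  "cartier_map p e \<phi> \<longleftrightarrow> (\<forall>x y. \<phi> (x + y) = \<phi> x + \<phi> y) \<and> (\<forall>r x. \<phi> (r ^ (p ^ e) * x) = r * \<phi> x)"

text \<open>A pair (R, C): C is a graded R-subalgebra of C_R = \<Oplus>_e C_{e,R}, with product
  \<phi>\<cdot>\<phi>' = \<phi> \<circ> F^e_*\<phi>' (i.e. composition), containing C_0 = C_{0,R} = R.\<close>
definition cartier_pair :: "nat \<Rightarrow> (nat \<Rightarrow> ('a::comm_ring_1 \<Rightarrow> 'a) set) \<Rightarrow> bool" where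
  "cartier_pair p C \<longleftrightarrow>
     (\<forall>e. \<forall>\<phi>\<in>C e. cartier_map p e \<phi>) \<and>
     C 0 = {(\<lambda>x. r * x) | r. True} \<and>
     (\<forall>e. (\<lambda>x. 0) \<in> C e) \<and>
     (\<forall>e. \<forall>\<phi>\<in>C e. \<forall>\<psi>\<in>C e. (\<lambda>x. \<phi> x + \<psi> x) \<in> C e) \<and>
     (\<forall>e e'. \<forall>\<phi>\<in>C e. \<forall>\<psi>\<in>C e'. \<phi> \<circ> \<psi> \<in> C (e + e'))"

definition C_ideal :: "(nat \<Rightarrow> ('a::comm_ring_1 \<Rightarrow> 'a) set) \<Rightarrow> 'a set \<Rightarrow> bool" where
  "C_ideal C I \<longleftrightarrow> is_ideal I \<and> (\<forall>e. \<forall>\<phi>\<in>C e. \<forall>x\<in>I. \<phi> x \<in> I)"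

definition Cplus :: "(nat \<Rightarrow> ('a::comm_ring_1 \<Rightarrow> 'a) set) \<Rightarrow> 'a \<Rightarrow> 'a set" where
  "Cplus C b = ideal_span {\<phi> (r * b) | e \<phi> r. e > 0 \<and> \<phi> \<in> C e}"

definition center_of_F_purity :: "(nat \<Rightarrow> ('a::comm_ring_1 \<Rightarrow> 'a) set) \<Rightarrow> 'a set \<Rightarrow> bool" where
  "center_of_F_purity C P \<longleftrightarrow> prime_ideal P \<and> C_ideal C P \<and> \<not> Cplus C 1 \<subseteq> P"

definition minimal_primes :: "'a::comm_ring_1 set \<Rightarrow> 'a set set" where
  "minimal_primes I = {P. prime_ideal P \<and> I \<subseteq> P \<and>
      (\<forall>Q. prime_ideal Q \<and> I \<subseteq> Q \<and> Q \<subseteq> P \<longrightarrow> Q = P)}"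

text \<open>Associated primes of R/I: primes of the form (I : x).\<close>
definition ass_primes :: "'a::comm_ring_1 set \<Rightarrow> 'a set set" where
  "ass_primes I = {P. prime_ideal P \<and> (\<exists>x. P = {r. r * x \<in> I})}"

definition U_set :: "'a::comm_ring_1 set \<Rightarrow> 'a set" where
  "U_set I = \<Union>(ass_primes I)"

definition nondegenerate_along :: "(nat \<Rightarrow> ('a::comm_ring_1 \<Rightarrow> 'a) set) \<Rightarrow> 'a set \<Rightarrow> bool" where
  "nondegenerate_along C I \<longleftrightarrow> (\<forall>P\<in>minimal_primes I. center_of_F_purity C P)"

definition purely_F_regular_along :: "(nat \<Rightarrow> ('a::comm_ring_1 \<Rightarrow> 'a) set) \<Rightarrow> 'a set \<Rightarrow> bool" where
  "purely_F_regular_along C I \<longleftrightarrow> nondegenerate_along C I \<and>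
     (\<forall>J. C_ideal C J \<and> J \<noteq> UNIV \<longrightarrow> (\<exists>P\<in>minimal_primes I. J \<subseteq> P))"

definition principal_test_element :: "(nat \<Rightarrow> ('a::comm_ring_1 \<Rightarrow> 'a) set) \<Rightarrow> 'a set \<Rightarrow> 'a \<Rightarrow> bool" where
  "principal_test_element C I c \<longleftrightarrow> c \<notin> U_set I \<and>
     (\<forall>r. r \<notin> U_set I \<longrightarrow> (\<exists>e>0. \<exists>\<phi>\<in>C e. \<phi> r = c))"

definition test_ideal :: "(nat \<Rightarrow> ('a::comm_ring_1 \<Rightarrow> 'a) set) \<Rightarrow> 'a set \<Rightarrow> 'a set" where
  "test_ideal C I = \<Inter>{J. C_ideal C J \<and> \<not> J \<subseteq> U_set I}"

definition test_element :: "(nat \<Rightarrow> ('a::comm_ring_1 \<Rightarrow> 'a) set) \<Rightarrow> 'a set \<Rightarrow> 'a \<Rightarrow> bool" where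
  "test_element C I b \<longleftrightarrow> b \<in> test_ideal C I \<and> b \<notin> U_set I"

end

theory Submission
  imports Defs
begin

text \<open>The test ideal formula only needs that \<open>R b + \<C>\<^sub>+ b\<close> is a \<open>\<C>\<close>-ideal containing \<open>b\<close> and that
  every \<open>\<C>\<close>-ideal containing \<open>b\<close> contains it.

  For pure \<open>F\<close>-regularity, the radical ideal \<open>a\<close> of the noetherian ring is the intersection of its
  finitely many minimal primes, all of them associated. If every proper \<open>\<C>\<close>-ideal lies in a minimal
  prime \<open>P\<close> and \<open>r \<notin> U\<close>, then \<open>\<C>\<^sub>+ r = R\<close>: otherwise \<open>r \<C>\<^sub>+ R \<subseteq> \<C>\<^sub>+ r \<subseteq> P\<close> with \<open>r \<notin> P\<close> would put
  \<open>\<C>\<^sub>+ R\<close> into the center of \<open>F\<close>-purity \<open>P\<close>. The ideals \<open>A\<^sub>e = {\<phi>(F\<^sup>e\<^sub>* r) | \<phi> \<in> \<C>\<^sub>e}\<close> satisfy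
  \<open>A\<^sub>e A\<^sub>e\<^sub>' \<subseteq> A\<^sub>e\<^sub>+\<^sub>e\<^sub>'\<close>, so the elements with a power in some \<open>A\<^sub>e\<close>, \<open>e > 0\<close>, form an ideal containing
  \<open>\<C>\<^sub>+ r\<close>; hence \<open>1 \<in> \<C>\<^sub>+ r\<close> gives \<open>1 \<in> A\<^sub>e\<close>. Conversely, if \<open>1\<close>
  is a principal test element, a proper \<open>\<C>\<close>-ideal meets no element outside \<open>U\<close>, hence lies in the
  union of the minimal primes and, by prime avoidance, in one of them.\<close>

section \<open>Ideals\<close>

lemma is_ideal_zero: "is_ideal I \<Longrightarrow> 0 \<in> I"
  by (simp add: is_ideal_def)

lemma is_ideal_add: "is_ideal I \<Longrightarrow> x \<in> I \<Longrightarrow> y \<in> I \<Longrightarrow> x + y \<in> I"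
  by (simp add: is_ideal_def)

lemma is_ideal_mult_left: "is_ideal I \<Longrightarrow> x \<in> I \<Longrightarrow> r * x \<in> I"
  by (simp add: is_ideal_def)

lemma is_ideal_mult_right: "is_ideal I \<Longrightarrow> x \<in> I \<Longrightarrow> x * r \<in> I"
  by (metis is_ideal_mult_left mult.commute)

lemma is_ideal_diff: "is_ideal I \<Longrightarrow> x \<in> I \<Longrightarrow> y \<in> I \<Longrightarrow> x - y \<in> I"
  using is_ideal_add[of I x "(- 1) * y"] is_ideal_mult_left[of I y "- 1"] by simp

lemma is_ideal_one_eq_UNIV: "is_ideal I \<Longrightarrow> 1 \<in> I \<Longrightarrow> I = UNIV"
  by (metis UNIV_eq_I is_ideal_mult_left mult.right_neutral)

lemma is_ideal_sum: "finite S \<Longrightarrow> is_ideal I \<Longrightarrow> (\<And>i. i \<in> S \<Longrightarrow> f i \<in> I) \<Longrightarrow> sum f S \<in> I"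
  by (induction S rule: finite_induct) (auto intro: is_ideal_zero is_ideal_add)

lemma is_ideal_prod: "is_ideal I \<Longrightarrow> finite S \<Longrightarrow> i \<in> S \<Longrightarrow> f i \<in> I \<Longrightarrow> prod f S \<in> I"
  by (simp add: prod.remove is_ideal_mult_right)

lemma is_ideal_power_add:
  assumes I: "is_ideal I" and x: "x ^ m \<in> I" and y: "y ^ n \<in> I"
  shows "(x + y) ^ (m + n) \<in> I"
proof -
  have "of_nat ((m + n) choose k) * x ^ k * y ^ (m + n - k) \<in> I" for k
  proof (cases "m \<le> k")
    case True
    then have "x ^ k = x ^ m * x ^ (k - m)"
      by (metis le_add_diff_inverse power_add)
    then have "of_nat ((m + n) choose k) * x ^ k * y ^ (m + n - k)
        = (of_nat ((m + n) choose k) * x ^ (k - m) * y ^ (m + n - k)) * x ^ m"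
      by (simp add: algebra_simps)
    then show ?thesis
      using is_ideal_mult_left[OF I x] by simp
  next
    case False
    then have "y ^ (m + n - k) = y ^ n * y ^ (m - k)"
      by (metis add.commute add_diff_assoc2 less_imp_le not_le power_add)
    then have "of_nat ((m + n) choose k) * x ^ k * y ^ (m + n - k)
        = (of_nat ((m + n) choose k) * x ^ k * y ^ (m - k)) * y ^ n"
      by (simp add: algebra_simps)
    then show ?thesis
      using is_ideal_mult_left[OF I y] by simp
  qed
  then have "(\<Sum>k\<le>m + n. of_nat ((m + n) choose k) * x ^ k * y ^ (m + n - k)) \<in> I"
    by (intro is_ideal_sum I) simp_all
  then show ?thesis
    by (simp only: binomial_ring)
qed

lemma prime_ideal_is_ideal: "prime_ideal P \<Longrightarrow> is_ideal P"
  by (simp add: prime_ideal_def)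

lemma prime_ideal_one_notin: "prime_ideal P \<Longrightarrow> 1 \<notin> P"
  unfolding prime_ideal_def using is_ideal_one_eq_UNIV by blast

lemma prime_ideal_prod_notin:
  "finite S \<Longrightarrow> prime_ideal P \<Longrightarrow> (\<And>i. i \<in> S \<Longrightarrow> f i \<notin> P) \<Longrightarrow> prod f S \<notin> P"
proof (induction S rule: finite_induct)
  case empty
  then show ?case
    using prime_ideal_one_notin by simp
next
  case (insert i S)
  then show ?case
    unfolding prime_ideal_def by (metis insertCI prod.insert)
qed

lemma prime_ideal_Inter_subset:
  assumes Q: "prime_ideal Q" and M: "finite M" "\<forall>P\<in>M. is_ideal P" and sub: "\<Inter>M \<subseteq> Q"
  shows "\<exists>P\<in>M. P \<subseteq> Q"
proof (rule ccontr)
  assume "\<not> ?thesis"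
  then have "\<forall>P\<in>M. \<exists>x. x \<in> P \<and> x \<notin> Q"
    by blast
  then obtain f where f: "\<forall>P\<in>M. f P \<in> P \<and> f P \<notin> Q"
    by (rule bchoice[THEN exE])
  then have "prod f M \<in> \<Inter>M"
    using M is_ideal_prod[OF _ M(1)] by (metis InterI)
  moreover have "prod f M \<notin> Q"
    using prime_ideal_prod_notin[OF M(1) Q] f by blast
  ultimately show False
    using sub by blast
qed

lemma is_ideal_ideal_span: "is_ideal (ideal_span S)"
  unfolding ideal_span_def is_ideal_def by auto

lemma ideal_span_superset: "S \<subseteq> ideal_span S"
  unfolding ideal_span_def by auto

lemma ideal_span_least: "is_ideal J \<Longrightarrow> S \<subseteq> J \<Longrightarrow> ideal_span S \<subseteq> J"
  unfolding ideal_span_def by auto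

lemma subset_Union_primes_remove:
  assumes S: "finite S" "\<forall>P\<in>S. prime_ideal P" and J: "is_ideal J" "J \<subseteq> \<Union>S"
    and P0: "P0 \<in> S" "S \<noteq> {P0}"
  shows "\<exists>P\<in>S. J \<subseteq> \<Union>(S - {P})"
proof (rule ccontr)
  assume "\<not> ?thesis"
  then have "\<forall>P\<in>S. \<exists>x. x \<in> J \<and> x \<notin> \<Union>(S - {P})"
    by blast
  then obtain g where g: "\<forall>P\<in>S. g P \<in> J \<and> g P \<notin> \<Union>(S - {P})"
    by (rule bchoice[THEN exE])
  then have gP: "g P \<in> P" if "P \<in> S" for P
    using that J(2) by blast
  define T where "T = S - {P0}"
  have T: "finite T" "T \<noteq> {}" "T \<subseteq> S"
    using S P0 by (auto simp: T_def)
  \<comment> \<open>The element \<open>g P0 + \<Prod>P\<in>T. g P\<close> of \<open>J\<close> lies in no member of \<open>S\<close>.\<close>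
  obtain P1 where "P1 \<in> T"
    using T(2) by blast
  then have "prod g T \<in> J"
    using T(3) g is_ideal_prod[OF J(1) T(1)] by blast
  then have "g P0 + prod g T \<in> J"
    using g P0(1) is_ideal_add[OF J(1)] by blast
  then obtain Q where Q: "Q \<in> S" "g P0 + prod g T \<in> Q"
    using J(2) by blast
  have Qp: "prime_ideal Q" and Qi: "is_ideal Q"
    using Q(1) S(2) prime_ideal_is_ideal by auto
  show False
  proof (cases "Q = P0")
    case True
    then have "prod g T \<in> Q"
      using is_ideal_diff[OF Qi Q(2), of "g P0"] gP[OF P0(1)] by simp
    moreover have "g P \<notin> Q" if "P \<in> T" for P
      using g that True P0(1) by (auto simp: T_def)
    ultimately show False
      using prime_ideal_prod_notin[OF T(1) Qp] by blast
  next
    case False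
    then have "Q \<in> T"
      using Q(1) by (simp add: T_def)
    then have "prod g T \<in> Q"
      using gP T(3) is_ideal_prod[OF Qi T(1)] by blast
    then have "g P0 \<in> Q"
      using is_ideal_diff[OF Qi Q(2), of "prod g T"] by simp
    then show False
      using g P0(1) Q(1) False by blast
  qed
qed

lemma prime_avoidance:
  "finite S \<Longrightarrow> \<forall>P\<in>S. prime_ideal P \<Longrightarrow> is_ideal J \<Longrightarrow> J \<subseteq> \<Union>S \<Longrightarrow> \<exists>P\<in>S. J \<subseteq> P"
proof (induction S rule: finite_psubset_induct)
  case (psubset S)
  have "0 \<in> \<Union>S"
    using psubset.prems is_ideal_zero by blast
  then obtain P0 where P0: "P0 \<in> S"
    by blast
  show ?case
  proof (cases "S = {P0}")
    case True
    then show ?thesis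
      using psubset.prems(3) by simp
  next
    case False
    then obtain P where P: "P \<in> S" "J \<subseteq> \<Union>(S - {P})"
      using subset_Union_primes_remove[OF psubset.hyps psubset.prems P0] by blast
    then have "\<exists>Q\<in>S - {P}. J \<subseteq> Q"
      using psubset.IH[of "S - {P}"] psubset.prems(1,2) by blast
    then show ?thesis
      by blast
  qed
qed

section \<open>Radical ideals of a noetherian ring\<close>

definition ideal_radical :: "'a::comm_ring_1 set \<Rightarrow> 'a set" where
  "ideal_radical I = {x. \<exists>n. x ^ n \<in> I}"

definition ideal_adjoin :: "'a::comm_ring_1 set \<Rightarrow> 'a \<Rightarrow> 'a set" where
  "ideal_adjoin I x = {i + s * x | i s. i \<in> I}"

lemma subset_ideal_radical: "I \<subseteq> ideal_radical I"
  unfolding ideal_radical_def by (metis (mono_tags) mem_Collect_eq power_one_right subsetI)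

lemma radical_ideal_ideal_radical:
  assumes I: "is_ideal I"
  shows "radical_ideal (ideal_radical I)"
  unfolding radical_ideal_def is_ideal_def ideal_radical_def
proof (intro conjI allI ballI impI)
  show "0 \<in> {x. \<exists>n. x ^ n \<in> I}"
    using is_ideal_zero[OF I] by (auto intro: exI[of _ 1])
next
  fix x y assume "x \<in> {x. \<exists>n. x ^ n \<in> I}" "y \<in> {x. \<exists>n. x ^ n \<in> I}"
  then show "x + y \<in> {x. \<exists>n. x ^ n \<in> I}"
    using is_ideal_power_add[OF I] by blast
next
  fix r x assume "x \<in> {x. \<exists>n. x ^ n \<in> I}"
  then show "r * x \<in> {x. \<exists>n. x ^ n \<in> I}"
    using is_ideal_mult_left[OF I] by (auto simp: power_mult_distrib)
next
  fix x n assume "x ^ n \<in> {x. \<exists>n. x ^ n \<in> I}"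
  then show "x \<in> {x. \<exists>n. x ^ n \<in> I}"
    by (auto simp flip: power_mult)
qed

lemma is_ideal_ideal_adjoin:
  assumes I: "is_ideal I"
  shows "is_ideal (ideal_adjoin I x)"
  unfolding is_ideal_def ideal_adjoin_def
proof (intro conjI ballI allI)
  show "0 \<in> {i + s * x |i s. i \<in> I}"
    using is_ideal_zero[OF I] by (intro CollectI exI[of _ 0]) simp
next
  fix u v assume "u \<in> {i + s * x |i s. i \<in> I}" "v \<in> {i + s * x |i s. i \<in> I}"
  then obtain i s j t where "u = i + s * x" "v = j + t * x" "i \<in> I" "j \<in> I"
    by blast
  then have "u + v = (i + j) + (s + t) * x" "i + j \<in> I"
    by (simp_all add: algebra_simps is_ideal_add I)
  then show "u + v \<in> {i + s * x |i s. i \<in> I}"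
    by blast
next
  fix r u assume "u \<in> {i + s * x |i s. i \<in> I}"
  then obtain i s where "u = i + s * x" "i \<in> I"
    by blast
  moreover have "r * u = r * i + (r * s) * x" if "u = i + s * x"
    using that by (simp add: algebra_simps)
  ultimately have "r * u = r * i + (r * s) * x" "r * i \<in> I"
    using is_ideal_mult_left[OF I] by auto
  then show "r * u \<in> {i + s * x |i s. i \<in> I}"
    by blast
qed

lemma subset_ideal_adjoin: "I \<subseteq> ideal_adjoin I x"
  unfolding ideal_adjoin_def by (intro subsetI CollectI exI[of _ 0] exI) simp

lemma mem_ideal_adjoin: "is_ideal I \<Longrightarrow> x \<in> ideal_adjoin I x"
  unfolding ideal_adjoin_def using is_ideal_zero by (intro CollectI exI[of _ 0] exI[of _ 1]) simp

text \<open>An element of both radicals has a power in \<open>(I + R x)(I + R y) \<subseteq> I + R x y = I\<close>.\<close>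
lemma radical_adjoin_Int_subset:
  assumes rad: "radical_ideal I" and xy: "x * y \<in> I"
  shows "ideal_radical (ideal_adjoin I x) \<inter> ideal_radical (ideal_adjoin I y) \<subseteq> I"
proof
  have I: "is_ideal I"
    using rad radical_ideal_def by blast
  fix z assume "z \<in> ideal_radical (ideal_adjoin I x) \<inter> ideal_radical (ideal_adjoin I y)"
  then obtain m n i s j t where z: "z ^ m = i + s * x" "z ^ n = j + t * y" "i \<in> I" "j \<in> I"
    unfolding ideal_radical_def ideal_adjoin_def by blast
  have "z ^ (m + n) = i * j + i * (t * y) + j * (s * x) + (s * t) * (x * y)"
    by (simp add: power_add z(1,2) algebra_simps)
  also have "\<dots> \<in> I"
    using z(3,4) xy is_ideal_add[OF I] is_ideal_mult_left[OF I] is_ideal_mult_right[OF I] by metis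
  finally show "z \<in> I"
    using rad radical_ideal_def by blast
qed

lemma wf_ideal_psupset:
  assumes "noetherian_ring TYPE('a::comm_ring_1)"
  shows "wf {(J, I::'a set). is_ideal I \<and> is_ideal J \<and> I \<subset> J}"
  unfolding wf_iff_no_infinite_down_chain
proof
  assume "\<exists>f. \<forall>i. (f (Suc i), f i) \<in> {(J, I::'a set). is_ideal I \<and> is_ideal J \<and> I \<subset> J}"
  then obtain f :: "nat \<Rightarrow> 'a set" where f: "\<And>i. is_ideal (f i)" "\<And>i. f i \<subset> f (Suc i)"
    by blast
  then obtain N where "\<forall>n\<ge>N. f n = f N"
    using assms unfolding noetherian_ring_def by (meson less_imp_le)
  then have "f (Suc N) = f N"
    using le_SucI by blast
  then show False
    using f(2)[of N] by simp
qed

lemma radical_ideal_eq_Inter_primes: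
  assumes noeth: "noetherian_ring TYPE('a::comm_ring_1)" and "radical_ideal (I::'a set)"
  shows "\<exists>M. finite M \<and> (\<forall>P\<in>M. prime_ideal P) \<and> I = \<Inter>M"
  using wf_ideal_psupset[OF noeth] assms(2)
proof (induction I rule: wf_induct_rule)
  case (less I)
  have I: "is_ideal I"
    using less.prems radical_ideal_def by blast
  consider "I = UNIV" | "prime_ideal I" | x y where "x * y \<in> I" "x \<notin> I" "y \<notin> I"
    unfolding prime_ideal_def using I by blast
  then show ?case
  proof cases
    case 1
    then show ?thesis
      by (intro exI[of _ "{}"]) simp
  next
    case 2
    then show ?thesis
      by (intro exI[of _ "{I}"]) simp
  next
    case (3 x y)
    define J where "J z = ideal_radical (ideal_adjoin I z)" for z
    have J_rad: "radical_ideal (J z)" for z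
      unfolding J_def by (rule radical_ideal_ideal_radical[OF is_ideal_ideal_adjoin[OF I]])
    have J_sub: "I \<subseteq> J z" for z
      unfolding J_def using subset_ideal_adjoin subset_ideal_radical by blast
    have J_psup: "I \<subset> J z" if "z \<notin> I" for z
    proof -
      have "z \<in> J z"
        unfolding J_def using mem_ideal_adjoin[OF I] subset_ideal_radical by blast
      then show ?thesis
        using J_sub that by blast
    qed
    have IH: "\<exists>M. finite M \<and> (\<forall>P\<in>M. prime_ideal P) \<and> J z = \<Inter>M" if "z \<notin> I" for z
    proof (rule less.IH)
      show "(J z, I) \<in> {(J, I). is_ideal I \<and> is_ideal J \<and> I \<subset> J}"
        using I J_rad[of z] J_psup[OF that] radical_ideal_def by blast
    qed (rule J_rad)
    obtain Mx where "finite Mx" "\<forall>P\<in>Mx. prime_ideal P" "J x = \<Inter>Mx"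
      using IH[OF 3(2)] by blast
    moreover obtain My where "finite My" "\<forall>P\<in>My. prime_ideal P" "J y = \<Inter>My"
      using IH[OF 3(3)] by blast
    moreover have "I = J x \<inter> J y"
      using radical_adjoin_Int_subset[OF less.prems 3(1)] J_sub by (auto simp: J_def)
    ultimately show ?thesis
      by (intro exI[of _ "Mx \<union> My"]) auto
  qed
qed

lemma minimal_prime_below:
  assumes M: "finite M" "\<forall>P\<in>M. prime_ideal P" "a = \<Inter>M"
    and Q: "prime_ideal Q" "a \<subseteq> Q"
  shows "\<exists>P\<in>M \<inter> minimal_primes a. P \<subseteq> Q"
proof -
  have M_ideal: "\<forall>P\<in>M. is_ideal P"
    using M(2) prime_ideal_is_ideal by blast
  let ?F = "{P\<in>M. P \<subseteq> Q}"
  have "?F \<noteq> {}"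
    using prime_ideal_Inter_subset[OF Q(1) M(1) M_ideal] M(3) Q(2) by blast
  moreover have "finite ?F"
    using M(1) by simp
  ultimately obtain P where P: "P \<in> ?F" and P_min: "\<forall>P'\<in>?F. P' \<subseteq> P \<longrightarrow> P = P'"
    using finite_has_minimal[of ?F] by blast
  have "P \<in> minimal_primes a"
    unfolding minimal_primes_def
  proof (intro CollectI conjI allI impI)
    show "prime_ideal P"
      using P M(2) by blast
    show "a \<subseteq> P"
      using P M(3) by blast
    fix Q' assume Q': "prime_ideal Q' \<and> a \<subseteq> Q' \<and> Q' \<subseteq> P"
    then have "\<Inter>M \<subseteq> Q'"
      using M(3) by simp
    then obtain P' where P': "P' \<in> M" "P' \<subseteq> Q'"
      using prime_ideal_Inter_subset[OF _ M(1) M_ideal] Q' by blast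
    have "P' \<in> ?F"
      using P P' Q' by blast
    moreover have "P' \<subseteq> P"
      using P' Q' by blast
    ultimately have "P = P'"
      using P_min by blast
    then show "Q' = P"
      using P' Q' by blast
  qed
  then show ?thesis
    using P by blast
qed

lemma finite_minimal_primes:
  assumes "noetherian_ring TYPE('a::comm_ring_1)" "radical_ideal (a::'a set)"
  shows "finite (minimal_primes a)"
proof -
  obtain M where M: "finite M" "\<forall>P\<in>M. prime_ideal P" "a = \<Inter>M"
    using radical_ideal_eq_Inter_primes[OF assms] by blast
  have "minimal_primes a \<subseteq> M"
  proof
    fix P assume P: "P \<in> minimal_primes a"
    then obtain P' where "P' \<in> M" "P' \<in> minimal_primes a" "P' \<subseteq> P"
      using minimal_prime_below[OF M] unfolding minimal_primes_def by blast
    then show "P \<in> M"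
      using P unfolding minimal_primes_def by blast
  qed
  then show ?thesis
    using M(1) finite_subset by blast
qed

lemma radical_ideal_eq_Inter_minimal_primes:
  assumes "noetherian_ring TYPE('a::comm_ring_1)" "radical_ideal (a::'a set)"
  shows "a = \<Inter>(minimal_primes a)"
proof -
  obtain M where M: "finite M" "\<forall>P\<in>M. prime_ideal P" "a = \<Inter>M"
    using radical_ideal_eq_Inter_primes[OF assms] by blast
  have "\<Inter>(minimal_primes a) \<subseteq> P" if "P \<in> M" for P
  proof -
    have "prime_ideal P" "a \<subseteq> P"
      using M(2,3) that by auto
    then obtain P' where "P' \<in> minimal_primes a" "P' \<subseteq> P"
      using minimal_prime_below[OF M] by blast
    then show ?thesis
      by blast
  qed
  then have "\<Inter>(minimal_primes a) \<subseteq> a"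
    unfolding M(3) by blast
  moreover have "a \<subseteq> \<Inter>(minimal_primes a)"
    unfolding minimal_primes_def by blast
  ultimately show ?thesis
    by blast
qed

text \<open>\<open>P = (a : x)\<close> for any \<open>x\<close> lying in all other minimal primes but not in \<open>P\<close>.\<close>
lemma minimal_prime_mem_ass_primes:
  assumes fin: "finite (minimal_primes a)" and a: "a = \<Inter>(minimal_primes a)"
    and P: "P \<in> minimal_primes a"
  shows "P \<in> ass_primes a"
proof -
  let ?S = "minimal_primes a - {P}"
  have Pp: "prime_ideal P"
    using P unfolding minimal_primes_def by blast
  have S_ideal: "\<forall>Q\<in>?S. is_ideal Q"
    unfolding minimal_primes_def using prime_ideal_is_ideal by blast
  have "\<not> \<Inter>?S \<subseteq> P"
  proof
    assume "\<Inter>?S \<subseteq> P"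
    then obtain Q where "Q \<in> ?S" "Q \<subseteq> P"
      using prime_ideal_Inter_subset[OF Pp _ S_ideal] fin by blast
    then show False
      using P unfolding minimal_primes_def by blast
  qed
  then obtain x where x: "x \<in> \<Inter>?S" "x \<notin> P"
    by blast
  have "P = {r. r * x \<in> a}"
  proof (intro set_eqI iffI CollectI)
    fix r assume r: "r \<in> P"
    have "r * x \<in> Q" if Q: "Q \<in> minimal_primes a" for Q
    proof (cases "Q = P")
      case True
      then show ?thesis
        using r is_ideal_mult_right[OF prime_ideal_is_ideal[OF Pp]] by simp
    next
      case False
      then have "x \<in> Q"
        using x(1) Q by blast
      then show ?thesis
        using Q S_ideal False is_ideal_mult_left by blast
    qed
    then show "r * x \<in> a"
      by (subst a) blast
  next
    fix r assume "r \<in> {r. r * x \<in> a}"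
    then show "r \<in> P"
      using P x(2) unfolding minimal_primes_def prime_ideal_def by blast
  qed
  then show ?thesis
    unfolding ass_primes_def using Pp by blast
qed

lemma U_set_subset_Union_minimal_primes:
  assumes a: "a = \<Inter>(minimal_primes a)"
  shows "U_set a \<subseteq> \<Union>(minimal_primes a)"
proof
  fix r assume "r \<in> U_set a"
  then obtain Q x where Q: "prime_ideal Q" "Q = {s. s * x \<in> a}" "r \<in> Q"
    unfolding U_set_def ass_primes_def by blast
  then have "x \<notin> a"
    using prime_ideal_one_notin[OF Q(1)] by auto
  then obtain P where P: "P \<in> minimal_primes a" "x \<notin> P"
    using a by blast
  then have "r * x \<in> P"
    using Q unfolding minimal_primes_def by blast
  then show "r \<in> \<Union>(minimal_primes a)"
    using P unfolding minimal_primes_def prime_ideal_def by blast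
qed

section \<open>Cartier algebras\<close>

lemma cartier_map_add: "cartier_map p e \<phi> \<Longrightarrow> \<phi> (x + y) = \<phi> x + \<phi> y"
  unfolding cartier_map_def by blast

lemma cartier_map_scale: "cartier_map p e \<phi> \<Longrightarrow> \<phi> (r ^ (p ^ e) * x) = r * \<phi> x"
  unfolding cartier_map_def by blast

lemma cartier_map_zero: "cartier_map p e \<phi> \<Longrightarrow> \<phi> 0 = 0"
  using cartier_map_add[of p e \<phi> 0 0] by simp

lemma is_ideal_Cplus: "is_ideal (Cplus C b)"
  unfolding Cplus_def by (rule is_ideal_ideal_span)

lemma Cplus_generator: "e > 0 \<Longrightarrow> \<phi> \<in> C e \<Longrightarrow> \<phi> (r * b) \<in> Cplus C b"
  unfolding Cplus_def
  by (rule subsetD[OF ideal_span_superset]) (intro CollectI exI[of _ e] exI[of _ \<phi>] exI[of _ r], simp)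

lemma Cplus_least:
  assumes "is_ideal J" and "\<And>e \<phi> r. e > 0 \<Longrightarrow> \<phi> \<in> C e \<Longrightarrow> \<phi> (r * b) \<in> J"
  shows "Cplus C b \<subseteq> J"
  unfolding Cplus_def using assms by (intro ideal_span_least) blast+

context
  fixes p :: nat and C :: "nat \<Rightarrow> ('a::comm_ring_1 \<Rightarrow> 'a) set"
  assumes cp: "cartier_pair p C"
begin

lemma cartier_pair_cartier_map: "\<phi> \<in> C e \<Longrightarrow> cartier_map p e \<phi>"
  using cp unfolding cartier_pair_def by blast

lemma cartier_pair_comp: "\<phi> \<in> C e \<Longrightarrow> \<psi> \<in> C e' \<Longrightarrow> \<phi> \<circ> \<psi> \<in> C (e + e')"
  using cp unfolding cartier_pair_def by blast

lemma cartier_pair_zero: "(\<lambda>x. 0) \<in> C e"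
  using cp unfolding cartier_pair_def by blast

lemma cartier_pair_add: "\<phi> \<in> C e \<Longrightarrow> \<psi> \<in> C e \<Longrightarrow> (\<lambda>x. \<phi> x + \<psi> x) \<in> C e"
  using cp unfolding cartier_pair_def by blast

lemma cartier_pair_degree_zero: "C 0 = {(\<lambda>x. r * x) | r. True}"
  using cp unfolding cartier_pair_def by blast

lemma cartier_pair_premult: "\<phi> \<in> C e \<Longrightarrow> (\<lambda>x. \<phi> (t * x)) \<in> C e"
  using cartier_pair_comp[of \<phi> e "\<lambda>x. t * x" 0] cartier_pair_degree_zero by (auto simp: comp_def)

lemma C_ideal_Cplus: "C_ideal C (Cplus C b)"
proof -
  define K where "K = {y. \<forall>e. \<forall>\<phi>\<in>C e. \<phi> y \<in> Cplus C b}"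
  have "is_ideal K"
    unfolding is_ideal_def
  proof (intro conjI ballI allI)
    have "\<phi> 0 \<in> Cplus C b" if "\<phi> \<in> C e" for e \<phi>
      using cartier_map_zero[OF cartier_pair_cartier_map[OF that]] is_ideal_zero[OF is_ideal_Cplus]
      by simp
    then show "0 \<in> K"
      unfolding K_def by blast
  next
    fix x y assume x: "x \<in> K" and y: "y \<in> K"
    have "\<phi> (x + y) \<in> Cplus C b" if "\<phi> \<in> C e" for e \<phi>
    proof -
      have "\<phi> x \<in> Cplus C b" "\<phi> y \<in> Cplus C b"
        using x y that unfolding K_def by blast+
      then show ?thesis
        using cartier_map_add[OF cartier_pair_cartier_map[OF that]] is_ideal_add[OF is_ideal_Cplus]
        by simp
    qed
    then show "x + y \<in> K"
      unfolding K_def by blast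
  next
    fix r x assume x: "x \<in> K"
    have "\<phi> (r * x) \<in> Cplus C b" if "\<phi> \<in> C e" for e \<phi>
    proof -
      have "\<forall>\<psi>\<in>C e. \<psi> x \<in> Cplus C b"
        using x unfolding K_def by blast
      from bspec[OF this cartier_pair_premult[OF that, of r]] show ?thesis
        by simp
    qed
    then show "r * x \<in> K"
      unfolding K_def by blast
  qed
  moreover have "\<phi> (r * b) \<in> K" if "e > 0" "\<phi> \<in> C e" for e \<phi> r
  proof -
    have "\<psi> (\<phi> (r * b)) \<in> Cplus C b" if "\<psi> \<in> C e'" for e' \<psi>
      using Cplus_generator[of "e' + e" "\<psi> \<circ> \<phi>"] cartier_pair_comp[OF that \<open>\<phi> \<in> C e\<close>] \<open>e > 0\<close>
      by simp
    then show ?thesis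
      unfolding K_def by blast
  qed
  ultimately have "Cplus C b \<subseteq> K"
    by (rule Cplus_least)
  then show ?thesis
    unfolding C_ideal_def K_def using is_ideal_Cplus by blast
qed

lemma C_ideal_principal_plus_Cplus:
  "C_ideal C {x + y | x y. x \<in> principal_ideal b \<and> y \<in> Cplus C b}"
  (is "C_ideal C ?B")
proof -
  have B: "?B = {r * b + y | r y. y \<in> Cplus C b}"
    unfolding principal_ideal_def by blast
  have "is_ideal ?B"
    unfolding B is_ideal_def
  proof (intro conjI ballI allI)
    show "0 \<in> {r * b + y | r y. y \<in> Cplus C b}"
      using is_ideal_zero[OF is_ideal_Cplus] by (intro CollectI exI[of _ 0]) simp
  next
    fix u v assume "u \<in> {r * b + y | r y. y \<in> Cplus C b}" "v \<in> {r * b + y | r y. y \<in> Cplus C b}"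
    then obtain r y s z where "u = r * b + y" "v = s * b + z" "y \<in> Cplus C b" "z \<in> Cplus C b"
      by blast
    then have "u + v = (r + s) * b + (y + z)" "y + z \<in> Cplus C b"
      by (simp_all add: algebra_simps is_ideal_add is_ideal_Cplus)
    then show "u + v \<in> {r * b + y | r y. y \<in> Cplus C b}"
      by blast
  next
    fix t u assume "u \<in> {r * b + y | r y. y \<in> Cplus C b}"
    then obtain r y where "u = r * b + y" "y \<in> Cplus C b"
      by blast
    then have "t * u = (t * r) * b + t * y" "t * y \<in> Cplus C b"
      by (simp_all add: algebra_simps is_ideal_mult_left is_ideal_Cplus)
    then show "t * u \<in> {r * b + y | r y. y \<in> Cplus C b}"
      by blast
  qed
  moreover have "\<phi> u \<in> ?B" if \<phi>: "\<phi> \<in> C e" and "u \<in> ?B" for e \<phi> u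
  proof -
    obtain r y where u: "u = r * b + y" "y \<in> Cplus C b"
      using \<open>u \<in> ?B\<close> unfolding B by blast
    have \<phi>u: "\<phi> u = \<phi> (r * b) + \<phi> y" "\<phi> y \<in> Cplus C b"
      using u cartier_map_add[OF cartier_pair_cartier_map[OF \<phi>]] C_ideal_Cplus \<phi>
      unfolding C_ideal_def by auto
    show ?thesis
    proof (cases "e = 0")
      case True
      then obtain t where "\<phi> = (\<lambda>x. t * x)"
        using \<phi> cartier_pair_degree_zero by blast
      then show ?thesis
        unfolding B using \<phi>u by (intro CollectI exI[of _ "t * r"] exI[of _ "\<phi> y"]) simp
    next
      case False
      then have "\<phi> (r * b) + \<phi> y \<in> Cplus C b"
        using \<phi> \<phi>u(2) Cplus_generator is_ideal_add[OF is_ideal_Cplus] by blast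
      then show ?thesis
        unfolding B \<phi>u(1) by (intro CollectI exI[of _ 0] exI[of _ "\<phi> (r * b) + \<phi> y"]) simp
    qed
  qed
  ultimately show ?thesis
    unfolding C_ideal_def by blast
qed

lemma principal_plus_Cplus_subset:
  assumes J: "C_ideal C J" and b: "b \<in> J"
  shows "{x + y | x y. x \<in> principal_ideal b \<and> y \<in> Cplus C b} \<subseteq> J"
proof -
  have Ji: "is_ideal J"
    using J unfolding C_ideal_def by blast
  have "Cplus C b \<subseteq> J"
  proof (rule Cplus_least[OF Ji])
    fix e \<phi> r assume "\<phi> \<in> C e"
    moreover have "r * b \<in> J"
      using is_ideal_mult_left[OF Ji b] .
    ultimately show "\<phi> (r * b) \<in> J"
      using J unfolding C_ideal_def by blast
  qed
  moreover have "principal_ideal b \<subseteq> J"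
    unfolding principal_ideal_def using is_ideal_mult_left[OF Ji b] by blast
  ultimately show ?thesis
    using is_ideal_add[OF Ji] by blast
qed

lemma test_ideal_eq_principal_plus_Cplus:
  assumes "test_element C a b"
  shows "test_ideal C a = {x + y | x y. x \<in> principal_ideal b \<and> y \<in> Cplus C b}"
    (is "_ = ?B")
proof
  have "b = 1 * b + 0" "0 \<in> Cplus C b"
    using is_ideal_zero[OF is_ideal_Cplus] by simp_all
  then have "b \<in> ?B"
    unfolding principal_ideal_def by blast
  then show "test_ideal C a \<subseteq> ?B"
    using assms C_ideal_principal_plus_Cplus unfolding test_element_def test_ideal_def by blast
  show "?B \<subseteq> test_ideal C a"
    unfolding test_ideal_def
  proof (rule Inter_greatest)
    fix J assume "J \<in> {J. C_ideal C J \<and> \<not> J \<subseteq> U_set a}"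
    moreover from this have "b \<in> J"
      using assms unfolding test_element_def test_ideal_def by blast
    ultimately show "?B \<subseteq> J"
      using principal_plus_Cplus_subset by blast
  qed
qed

end

definition cartier_values :: "(nat \<Rightarrow> ('a::comm_ring_1 \<Rightarrow> 'a) set) \<Rightarrow> 'a \<Rightarrow> nat \<Rightarrow> 'a set" where
  "cartier_values C r e = (\<lambda>\<phi>. \<phi> r) ` C e"

context
  fixes p :: nat and C :: "nat \<Rightarrow> ('a::comm_ring_1 \<Rightarrow> 'a) set"
  assumes cp: "cartier_pair p C" and p_pos: "p > 0"
begin

lemma Cplus_one_subset_prime:
  assumes P: "prime_ideal P" "Cplus C r \<subseteq> P" "r \<notin> P"
  shows "Cplus C 1 \<subseteq> P"
proof (rule Cplus_least[OF prime_ideal_is_ideal[OF P(1)]])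
  fix e \<psi> t assume \<psi>: "e > 0" "\<psi> \<in> C e"
  have "r ^ (p ^ e) = r ^ (p ^ e - 1) * r"
    using power_minus_mult[of "p ^ e" r] p_pos by simp
  then have "r ^ (p ^ e) * t = (r ^ (p ^ e - 1) * t) * r"
    by (simp add: algebra_simps)
  then have "r * \<psi> (t * 1) = \<psi> ((r ^ (p ^ e - 1) * t) * r)"
    using cartier_map_scale[OF cartier_pair_cartier_map[OF cp \<psi>(2)], of r t] by simp
  also have "\<dots> \<in> P"
    using Cplus_generator[of e \<psi> C] \<psi> P(2) by blast
  finally show "\<psi> (t * 1) \<in> P"
    using P(1,3) unfolding prime_ideal_def by blast
qed

lemma is_ideal_cartier_values: "is_ideal (cartier_values C r e)"
  unfolding is_ideal_def cartier_values_def
proof (intro conjI ballI allI)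
  show "0 \<in> (\<lambda>\<phi>. \<phi> r) ` C e"
    using cartier_pair_zero[OF cp] by force
next
  fix u v assume "u \<in> (\<lambda>\<phi>. \<phi> r) ` C e" "v \<in> (\<lambda>\<phi>. \<phi> r) ` C e"
  then obtain \<phi> \<psi> where "u = \<phi> r" "v = \<psi> r" "\<phi> \<in> C e" "\<psi> \<in> C e"
    by blast
  then show "u + v \<in> (\<lambda>\<phi>. \<phi> r) ` C e"
    using cartier_pair_add[OF cp] by force
next
  fix s u assume "u \<in> (\<lambda>\<phi>. \<phi> r) ` C e"
  then obtain \<phi> where \<phi>: "u = \<phi> r" "\<phi> \<in> C e"
    by blast
  then have "s * u = (\<lambda>x. \<phi> (s ^ (p ^ e) * x)) r"
    using cartier_map_scale[OF cartier_pair_cartier_map[OF cp \<phi>(2)]] by simp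
  then show "s * u \<in> (\<lambda>\<phi>. \<phi> r) ` C e"
    by (rule rev_image_eqI[OF cartier_pair_premult[OF cp \<phi>(2)]])
qed

text \<open>If \<open>u = \<phi> r\<close> and \<open>v = \<psi> r\<close>, then \<open>\<psi> (v\<^bsup>(p\<^sup>e - 1) p\<^sup>e'\<^esup> r) = v\<^bsup>p\<^sup>e\<^esup>\<close> and hence
  \<open>\<phi> (r \<psi> (v\<^bsup>(p\<^sup>e - 1) p\<^sup>e'\<^esup> r)) = u v\<close>.\<close>
lemma cartier_values_mult:
  assumes u: "u \<in> cartier_values C r e" and v: "v \<in> cartier_values C r e'"
  shows "u * v \<in> cartier_values C r (e + e')"
proof -
  obtain \<phi> \<psi> where \<phi>: "u = \<phi> r" "\<phi> \<in> C e" and \<psi>: "v = \<psi> r" "\<psi> \<in> C e'"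
    using u v unfolding cartier_values_def by blast
  define c where "c = (v ^ (p ^ e - 1)) ^ (p ^ e')"
  define \<chi> where "\<chi> = (\<lambda>y. \<phi> (r * y)) \<circ> (\<lambda>x. \<psi> (c * x))"
  have "\<psi> (c * r) = v ^ (p ^ e - 1) * v"
    unfolding c_def \<psi>(1) by (rule cartier_map_scale[OF cartier_pair_cartier_map[OF cp \<psi>(2)]])
  also have "\<dots> = v ^ (p ^ e)"
    using power_minus_mult[of "p ^ e" v] p_pos by simp
  finally have "\<chi> r = \<phi> (v ^ (p ^ e) * r)"
    unfolding \<chi>_def by (simp add: mult.commute)
  also have "\<dots> = u * v"
    unfolding \<phi>(1) cartier_map_scale[OF cartier_pair_cartier_map[OF cp \<phi>(2)]] by (rule mult.commute)
  finally have "u * v = \<chi> r"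
    by (rule sym)
  moreover have "\<chi> \<in> C (e + e')"
    unfolding \<chi>_def
    by (rule cartier_pair_comp[OF cp cartier_pair_premult[OF cp \<phi>(2)] cartier_pair_premult[OF cp \<psi>(2)]])
  ultimately show ?thesis
    unfolding cartier_values_def by (rule rev_image_eqI[rotated])
qed

lemma cartier_values_power:
  assumes "x ^ n \<in> cartier_values C r e"
  shows "x ^ (n * Suc m) \<in> cartier_values C r (e * Suc m)"
proof (induction m)
  case 0
  then show ?case
    using assms by simp
next
  case (Suc m)
  have "x ^ (n * Suc m) * x ^ n \<in> cartier_values C r (e * Suc m + e)"
    using cartier_values_mult[OF Suc.IH assms] .
  then show ?case
    by (simp add: power_add[symmetric] algebra_simps)
qed

lemma one_mem_Cplus_imp_splitting:
  assumes "1 \<in> Cplus C r"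
  shows "\<exists>e>0. \<exists>\<phi>\<in>C e. \<phi> r = 1"
proof -
  define V where "V = {x. \<exists>e>0. \<exists>n. x ^ n \<in> cartier_values C r e}"
  have "is_ideal V"
    unfolding is_ideal_def
  proof (intro conjI ballI allI)
    have "(0::'a) ^ 1 \<in> cartier_values C r 1"
      using is_ideal_zero[OF is_ideal_cartier_values] by simp
    then show "0 \<in> V"
      unfolding V_def by blast
  next
    fix x y assume "x \<in> V" "y \<in> V"
    then obtain e n e' m where
      x: "e > 0" "x ^ n \<in> cartier_values C r e" and y: "e' > 0" "y ^ m \<in> cartier_values C r e'"
      unfolding V_def by blast
    obtain k l where "e' = Suc k" "e = Suc l"
      using x(1) y(1) not0_implies_Suc by blast
    then have "x ^ (n * e') \<in> cartier_values C r (e * e')"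
      and "y ^ (m * e) \<in> cartier_values C r (e * e')"
      using cartier_values_power[OF x(2), of k] cartier_values_power[OF y(2), of l]
      by (simp_all add: mult.commute)
    then have "(x + y) ^ (n * e' + m * e) \<in> cartier_values C r (e * e')"
      by (rule is_ideal_power_add[OF is_ideal_cartier_values])
    moreover have "e * e' > 0"
      using x(1) y(1) by simp
    ultimately show "x + y \<in> V"
      unfolding V_def by blast
  next
    fix s x assume "x \<in> V"
    then obtain e n where "e > 0" "x ^ n \<in> cartier_values C r e"
      unfolding V_def by blast
    moreover from this have "(s * x) ^ n \<in> cartier_values C r e"
      using is_ideal_mult_left[OF is_ideal_cartier_values] by (simp add: power_mult_distrib)
    ultimately show "s * x \<in> V"
      unfolding V_def by blast
  qed
  moreover have "\<psi> (t * r) \<in> V" if "e > 0" "\<psi> \<in> C e" for e \<psi> t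
  proof -
    have "(\<psi> (t * r)) ^ 1 \<in> cartier_values C r e"
      unfolding cartier_values_def using cartier_pair_premult[OF cp that(2), of t] by force
    then show ?thesis
      unfolding V_def using that(1) by blast
  qed
  ultimately have "Cplus C r \<subseteq> V"
    by (rule Cplus_least)
  then obtain e n where "e > 0" "1 ^ n \<in> cartier_values C r e"
    using assms unfolding V_def by blast
  then show ?thesis
    unfolding cartier_values_def by (auto intro!: exI[of _ e])
qed

lemma one_mem_Cplus_if_purely_F_regular:
  assumes fin: "finite (minimal_primes a)" and a: "a = \<Inter>(minimal_primes a)"
    and reg: "purely_F_regular_along C a" and r: "r \<notin> U_set a"
  shows "1 \<in> Cplus C r"
proof (rule ccontr)
  assume "1 \<notin> Cplus C r"
  then obtain P where P: "P \<in> minimal_primes a" "Cplus C r \<subseteq> P"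
    using reg C_ideal_Cplus[OF cp] unfolding purely_F_regular_along_def by blast
  have "r \<notin> P"
    using minimal_prime_mem_ass_primes[OF fin a P(1)] r unfolding U_set_def by blast
  moreover have "prime_ideal P"
    using P(1) unfolding minimal_primes_def by blast
  ultimately have "Cplus C 1 \<subseteq> P"
    using Cplus_one_subset_prime P(2) by blast
  moreover have "center_of_F_purity C P"
    using reg P(1) unfolding purely_F_regular_along_def nondegenerate_along_def by blast
  ultimately show False
    unfolding center_of_F_purity_def by blast
qed

lemma principal_test_element_one_if_purely_F_regular:
  assumes "finite (minimal_primes a)" "a = \<Inter>(minimal_primes a)" "purely_F_regular_along C a"
  shows "principal_test_element C a 1"
  unfolding principal_test_element_def
proof (intro conjI allI impI)
  show "1 \<notin> U_set a"
    unfolding U_set_def ass_primes_def using prime_ideal_one_notin by blast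
  fix r assume "r \<notin> U_set a"
  then show "\<exists>e>0. \<exists>\<phi>\<in>C e. \<phi> r = 1"
    using one_mem_Cplus_imp_splitting one_mem_Cplus_if_purely_F_regular[OF assms] by blast
qed

end

lemma purely_F_regular_if_principal_test_element_one:
  assumes fin: "finite (minimal_primes a)" and a: "a = \<Inter>(minimal_primes a)"
    and "nondegenerate_along C a" and test: "principal_test_element C a 1"
  shows "purely_F_regular_along C a"
  unfolding purely_F_regular_along_def
proof (intro conjI allI impI)
  show "nondegenerate_along C a"
    by fact
  fix J assume J: "C_ideal C J \<and> J \<noteq> UNIV"
  have Ji: "is_ideal J"
    using J unfolding C_ideal_def by blast
  have "J \<subseteq> U_set a"
  proof
    fix r assume r: "r \<in> J"
    show "r \<in> U_set a"
    proof (rule ccontr)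
      assume "r \<notin> U_set a"
      then obtain e \<phi> where "\<phi> \<in> C e" "\<phi> r = 1"
        using test unfolding principal_test_element_def by blast
      then have "1 \<in> J"
        using J r unfolding C_ideal_def by metis
      then show False
        using is_ideal_one_eq_UNIV[OF Ji] J by blast
    qed
  qed
  also have "\<dots> \<subseteq> \<Union>(minimal_primes a)"
    by (rule U_set_subset_Union_minimal_primes[OF a])
  finally show "\<exists>P\<in>minimal_primes a. J \<subseteq> P"
    using prime_avoidance[OF fin _ Ji] unfolding minimal_primes_def by blast
qed

theorem theorem2p12:
  fixes p :: nat and C :: "nat \<Rightarrow> ('a::comm_ring_1 \<Rightarrow> 'a) set"
    and a :: "'a set" and b :: 'a
  assumes "prime p" and "of_nat p = (0::'a)"
    and "noetherian_ring TYPE('a)" and "F_finite p TYPE('a)"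
    and "cartier_pair p C"
    and "C_ideal C a" and "radical_ideal a"
    and "nondegenerate_along C a"
    and "test_element C a b"
  shows "test_ideal C a = {x + y | x y. x \<in> principal_ideal b \<and> y \<in> Cplus C b}
    \<and> (purely_F_regular_along C a \<longleftrightarrow> principal_test_element C a 1)"
proof -
  have p_pos: "p > 0"
    using \<open>prime p\<close> prime_gt_0_nat by blast
  have fin: "finite (minimal_primes a)"
    using finite_minimal_primes \<open>noetherian_ring TYPE('a)\<close> \<open>radical_ideal a\<close> by blast
  have a: "a = \<Inter>(minimal_primes a)"
    using radical_ideal_eq_Inter_minimal_primes \<open>noetherian_ring TYPE('a)\<close> \<open>radical_ideal a\<close> by blast
  show ?thesis
    using test_ideal_eq_principal_plus_Cplus[OF \<open>cartier_pair p C\<close> \<open>test_element C a b\<close>]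
      principal_test_element_one_if_purely_F_regular[OF \<open>cartier_pair p C\<close> p_pos fin a]
      purely_F_regular_if_principal_test_element_one[OF fin a \<open>nondegenerate_along C a\<close>]
    by blast
qed

end
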